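(* Let $N \ge 2$ and $r\geq 1$ be integers and $(s_1,\ldots,s_r)\in U_r$. Then for $r=1$, we have \begin{equation*} \left(1-\frac{1}{z_1}\right)\mathrm{Li}^{\star}_{(z_1)}(s_1-1)_{\geq N} + \frac{z_1^{N-1}}{N^{s_1-1}} =\sum_{k\geq0} (-1)^k\frac{(s_1-1)_{k+1}}{(k+1)!}\mathrm{Li}^{\star}_{(z_1)}(s_1+k)_{\geq N}, \end{equation*} and for $r>1$, we have \begin{align*} &\left(1-\frac{1}{z_1}\right)\mathrm{Li}^{\star}_{(z_1,\ldots,z_r)}(s_1-1,s_{2},\ldots,s_r)_{\geq N}+ \frac{1}{z_1}\mathrm{Li}^{\star}_{(z_1z_2,z_{3},\ldots,z_r)}(s_1+s_{2}-1,s_{3},\ldots,s_r)_{\geq N}\\ &=\sum_{k\geq0}(-1)^k\frac{(s_1-1)_{k+1}}{(k+1)!}\mathrm{Li}^{\star}_{(z_1,\ldots,z_r)}(s_1+k,s_2,\ldots,s_r)_{\geq N}, \end{align*} where for any complex number $s$ and non-negative integer $k$, $(s)_k$ denotes the Pochhammer symbol $s(s+1)\cdots(s+k-1)$.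
   Context: Let $r\geq 1$ be an integer and let $\mathbf{z}=(z_1,\ldots,z_r)\in\mathbb{C}^r$ with $|z_i|\le 1$ for all $1\le i\le r$ (in the paper the $z_i$ are typically roots of unity). Let $U_r := \{ (s_1, \ldots, s_r) \in \mathbb{C}^r : \Re(s_1 + \cdots + s_i) > i \text{ for all } 1 \le i \le r \}$. For an integer $N\geq1$ and $(s_1,\ldots,s_r)\in U_r$, the tail of the multiple polylogarithm-star function is $$\mathrm{Li}^{\star}_{(z_1,\ldots,z_r)}(s_1,\ldots,s_r)_{\geq N} := \sum_{n_1\geq \cdots \geq n_r \geq N}\frac{z_1^{n_1}\cdots z_r^{n_r}}{n_1^{s_1}\cdots n_r^{s_r}},$$ which is holomorphic on $U_r$ and extends meromorphically to $\mathbb{C}^r$. In both identities the first term on the left-hand side is considered to be $0$ if $z_1=1$; when $z_1\ne 1$, the series defining $\mathrm{Li}^{\star}_{(z_1,\ldots,z_r)}(s_1-1,s_{2},\ldots,s_r)_{\geq N}$ converges (as a limit of partial sums) for $(s_1,\ldots,s_r)\in U_r$. *)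

theory Defs
  imports "HOL-Analysis.Analysis"
begin

text \<open>Finite partial sum of the multiple polylogarithm-star tail:
  sum over M >= n_1 >= n_2 >= ... >= n_r >= N of
  z_1^n_1 ... z_r^n_r / (n_1^s_1 ... n_r^s_r).\<close>
fun Li_star_fin :: "complex list \<Rightarrow> complex list \<Rightarrow> nat \<Rightarrow> nat \<Rightarrow> complex" where
  "Li_star_fin [] [] N M = 1"
| "Li_star_fin (z # zs) (s # ss) N M =
     (\<Sum>n = N..M. z ^ n / (of_nat n powr s) * Li_star_fin zs ss N n)"
| "Li_star_fin _ _ N M = 0"

definition Li_star_tail :: "complex list \<Rightarrow> complex list \<Rightarrow> nat \<Rightarrow> complex" where
  "Li_star_tail zs ss N = lim (\<lambda>M. Li_star_fin zs ss N M)"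

definition in_U :: "complex list \<Rightarrow> bool" where
  "in_U ss \<longleftrightarrow> (\<forall>i\<in>{1..length ss}. Re (sum_list (take i ss)) > real i)"

end

theory Submission
  imports Defs
begin

(* For n >= 2 the generalised binomial theorem expands n^(1-s) - (n+1)^(1-s) as
   sum_k (-1)^k (s-1)_(k+1)/(k+1)! n^(-s-k).  Substituting this into the outermost sum turns the
   truncated right-hand side into sum_(N<=n<=M) z^n (n^(1-s) - (n+1)^(1-s)) R(n), where R is the
   inner sum of depth r-1.  Shifting n -> n-1 in the second half costs a factor 1/z and produces the
   sum over n_1 > n_2; adding back the diagonal n_1 = n_2 (the depth r-1 sum with merged first
   entries, or for r = 1 the boundary term at n = N) gives the left-hand side.  The analytic input is
   the growth bound |R(n)| = O(n^e) with e < Re s_1 - 1, which follows from U_r: it kills the boundary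
   term at n = M+1 and, through Tannery's theorem, allows the limit M -> oo to be taken under the
   sum over k. *)

lemma finite_ball_less_imp_ex_less:
  fixes S :: "'a::{dense_linorder,no_bot} set"
  assumes "finite S" "\<forall>x\<in>S. x < b"
  shows "\<exists>e<b. \<forall>x\<in>S. x < e"
proof (cases "S = {}")
  case True
  then show ?thesis using lt_ex[of b] by auto
next
  case False
  with assms have "Max S < b" by auto
  then obtain e where "Max S < e" "e < b" using dense by blast
  with assms show ?thesis by (meson Max_ge le_less_trans)
qed

lemma convergent_sum_atLeastAtMost:
  fixes f :: "nat \<Rightarrow> 'a::real_normed_vector"
  assumes "summable f"
  shows "convergent (\<lambda>M. \<Sum>n=N..M. f n)"
proof -
  have "(\<lambda>M. (\<Sum>n\<le>M. f n) - (\<Sum>n<N. f n)) \<longlonglongrightarrow> suminf f - (\<Sum>n<N. f n)"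
    using summable_LIMSEQ'[OF assms] by (intro tendsto_diff tendsto_const)
  moreover have "eventually (\<lambda>M. (\<Sum>n\<le>M. f n) - (\<Sum>n<N. f n) = (\<Sum>n=N..M. f n)) sequentially"
    using eventually_ge_at_top[of N]
  proof eventually_elim
    case (elim M)
    then have "{..M} = {..<N} \<union> {N..M}" by auto
    then show ?case by (simp add: sum.union_disjoint[of "{..<N}" "{N..M}"] ivl_disj_int)
  qed
  ultimately show ?thesis
    unfolding convergent_def by (blast intro: Lim_transform_eventually)
qed

lemma summation_by_parts_shift:
  fixes z :: "'a::field" and v R :: "nat \<Rightarrow> 'a"
  assumes "1 \<le> N" "N \<le> M"
  shows "(\<Sum>n=N..M. z ^ n * (v n - v (Suc n)) * R n) =
    (1 - 1 / z) * (\<Sum>n=N..M. z ^ n * v n * R n) - z ^ M * v (Suc M) * R (Suc M)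
    + 1 / z * ((\<Sum>m=N..Suc M. z ^ m * v m * (R m - R (m - 1))) + z ^ N * v N * R (N - 1))"
proof (cases "z = 0")
  case True
  then have "z ^ n = 0" if "n \<ge> N" for n
    using that assms by simp
  with assms show ?thesis by (simp add: sum.neutral)
next
  case False
  have "z * (\<Sum>n=N..M. z ^ n * v (Suc n) * R n) = (\<Sum>m=Suc N..Suc M. z ^ m * v m * R (m - 1))"
    unfolding sum.shift_bounds_cl_Suc_ivl by (simp add: sum_distrib_left mult_ac)
  also have "\<dots> = (\<Sum>m=N..Suc M. z ^ m * v m * R (m - 1)) - z ^ N * v N * R (N - 1)"
    using assms by (simp add: sum.atLeast_Suc_atMost)
  also have "(\<Sum>m=N..Suc M. z ^ m * v m * R (m - 1))
      = (\<Sum>m=N..Suc M. z ^ m * v m * R m) - (\<Sum>m=N..Suc M. z ^ m * v m * (R m - R (m - 1)))"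
    unfolding sum_subtractf[symmetric] by (rule sum.cong) (simp_all add: algebra_simps)
  also have "(\<Sum>m=N..Suc M. z ^ m * v m * R m)
      = (\<Sum>n=N..M. z ^ n * v n * R n) + z * (z ^ M * v (Suc M) * R (Suc M))"
    using assms by (simp add: mult_ac)
  finally have "(\<Sum>n=N..M. z ^ n * v (Suc n) * R n) = 1 / z * ((\<Sum>n=N..M. z ^ n * v n * R n)
      + z * (z ^ M * v (Suc M) * R (Suc M))
      - (\<Sum>m=N..Suc M. z ^ m * v m * (R m - R (m - 1))) - z ^ N * v N * R (N - 1))"
    using False by (simp add: field_simps)
  then show ?thesis
    using False by (simp add: sum_subtractf algebra_simps right_diff_distrib)
qed

lemma mult_lim_eq:
  fixes F :: "nat \<Rightarrow> 'a::real_normed_field"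
  assumes "(\<lambda>M. w * F M) \<longlonglongrightarrow> X"
  shows "w * lim F = X"
proof (cases "w = 0")
  case True
  with assms show ?thesis by (simp add: LIMSEQ_const_iff)
next
  case False
  then have "(\<lambda>M. w * F M / w) \<longlonglongrightarrow> X / w"
    using assms by (intro tendsto_divide tendsto_const)
  with False have "F \<longlonglongrightarrow> X / w" by simp
  with False show ?thesis by (simp add: limI)
qed

lemma in_U_Cons:
  "in_U (s # ss) \<longleftrightarrow> (\<forall>i\<le>length ss. real i - Re (sum_list (take i ss)) < Re s - 1)"
proof -
  have "{1..length (s # ss)} = Suc ` {..length ss}"
    by (simp add: image_Suc_atLeastAtMost flip: atLeast0AtMost)
  then show ?thesis
    unfolding in_U_def by (auto simp: Ball_def)
qed

lemma in_U_Cons_add_of_nat: "in_U (s # ss) \<Longrightarrow> in_U ((s + of_nat k) # ss)"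
  unfolding in_U_Cons by (auto intro: less_le_trans)

lemma in_U_merge:
  assumes "in_U (s1 # s2 # ss)"
  shows "in_U ((s1 + s2 - 1) # ss)"
  unfolding in_U_Cons
proof (intro allI impI)
  fix i assume "i \<le> length ss"
  then show "real i - Re (sum_list (take i ss)) < Re (s1 + s2 - 1) - 1"
    using assms[unfolded in_U_Cons, rule_format, of "Suc i"] by simp
qed

lemma norm_Li_star_summand_le:
  fixes z s w :: complex
  assumes "norm z \<le> 1" "n \<ge> 1" "norm w \<le> C * real n powr e"
  shows "norm (z ^ m / of_nat n powr s * w) \<le> C * real n powr (e - Re s)"
proof -
  have "norm (z ^ m / of_nat n powr s * w) = norm z ^ m * (norm w / real n powr Re s)"
    by (simp add: norm_mult norm_divide norm_power norm_powr_real_powr)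
  also have "\<dots> \<le> 1 * (C * real n powr e / real n powr Re s)"
    using assms by (intro mult_mono power_le_one divide_right_mono) auto
  also have "\<dots> = C * real n powr (e - Re s)"
    by (simp add: powr_diff)
  finally show ?thesis .
qed

lemma norm_Li_star_fin_le_powr:
  assumes "length zs = length ss" "\<forall>w\<in>set zs. norm w \<le> 1" "N \<ge> 1"
    and "\<forall>i\<le>length ss. real i - Re (sum_list (take i ss)) < e"
  shows "\<exists>C\<ge>0. \<forall>M\<ge>1. norm (Li_star_fin zs ss N M) \<le> C * real M powr e"
  using assms
proof (induction zs ss arbitrary: e rule: list_induct2)
  case Nil
  then have "0 < e" by auto
  then show ?case by (auto intro!: exI[of _ 1] ge_one_powr_ge_zero)
next
  case (Cons z zs s ss)
  have "0 < e" using Cons.prems(3) by auto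
  have "real j - Re (sum_list (take j ss)) < e + Re s - 1" if "j \<le> length ss" for j
    using Cons.prems(3) that by (auto dest!: spec[of _ "Suc j"])
  then obtain e' where e': "e' < e + Re s - 1"
    and below_e': "\<forall>j\<le>length ss. real j - Re (sum_list (take j ss)) < e'"
    using finite_ball_less_imp_ex_less[of "(\<lambda>j. real j - Re (sum_list (take j ss))) ` {..length ss}"
        "e + Re s - 1"] by auto
  obtain C where "C \<ge> 0" and C: "\<forall>M\<ge>1. norm (Li_star_fin zs ss N M) \<le> C * real M powr e'"
    using Cons.IH[OF _ _ below_e'] Cons.prems by auto
  define p where "p = e' - Re s - e"
  have summable: "summable (\<lambda>n. real n powr p)"
    using e' by (simp add: summable_real_powr_iff p_def)
  have "norm (Li_star_fin (z # zs) (s # ss) N M) \<le> C * (\<Sum>n. real n powr p) * real M powr e"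
    if "M \<ge> 1" for M
  proof -
    have "norm (Li_star_fin (z # zs) (s # ss) N M) \<le> (\<Sum>n=N..M. C * real n powr (e' - Re s))"
      unfolding Li_star_fin.simps(2) using Cons.prems C
      by (intro order.trans[OF norm_sum] sum_mono norm_Li_star_summand_le) auto
    also have "\<dots> \<le> (\<Sum>n=N..M. C * real M powr e * real n powr p)"
    proof (rule sum_mono)
      fix n assume n: "n \<in> {N..M}"
      then have "C * real n powr (e' - Re s) = C * real n powr e * real n powr p"
        using Cons.prems(2) by (simp add: p_def powr_add[symmetric])
      also have "\<dots> \<le> C * real M powr e * real n powr p"
        using n \<open>C \<ge> 0\<close> \<open>0 < e\<close> by (intro mult_right_mono mult_left_mono powr_mono2) auto
      finally show "C * real n powr (e' - Re s) \<le> C * real M powr e * real n powr p" .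
    qed
    also have "\<dots> \<le> C * real M powr e * (\<Sum>n. real n powr p)"
      unfolding sum_distrib_left[symmetric] using \<open>C \<ge> 0\<close>
      by (intro mult_left_mono sum_le_suminf summable) auto
    finally show ?thesis by (simp add: mult_ac)
  qed
  moreover have "0 \<le> C * (\<Sum>n. real n powr p)"
    using \<open>C \<ge> 0\<close> summable by (intro mult_nonneg_nonneg suminf_nonneg) auto
  ultimately show ?case by blast
qed

lemma norm_Li_star_fin_le_powr_in_U:
  assumes "length zs = length ss" "\<forall>w\<in>set zs. norm w \<le> 1" "N \<ge> 1" "in_U (s # ss)"
  obtains e C where "e < Re s - 1" "C \<ge> 0"
    "\<And>n. n \<ge> 1 \<Longrightarrow> norm (Li_star_fin zs ss N n) \<le> C * real n powr e"
proof -
  obtain e where "e < Re s - 1" "\<forall>i\<le>length ss. real i - Re (sum_list (take i ss)) < e"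
    using assms(4) finite_ball_less_imp_ex_less[of "(\<lambda>i. real i - Re (sum_list (take i ss))) ` {..length ss}"
        "Re s - 1"] by (auto simp: in_U_Cons)
  with norm_Li_star_fin_le_powr[OF assms(1-3)] that show ?thesis by blast
qed

lemma norm_Li_star_fin_add_of_nat_le:
  assumes "N \<ge> 1" "length zs = length ss" "\<forall>w\<in>set (z # zs). norm w \<le> 1" "in_U (s # ss)"
  obtains B where
    "\<And>k M. norm (Li_star_fin (z # zs) ((s + of_nat k) # ss) N M) \<le> B * (1 / real N) ^ k"
proof -
  have "\<forall>w\<in>set zs. norm w \<le> 1" using assms(3) by simp
  then obtain e C where e: "e < Re s - 1" and "C \<ge> 0"
    and C: "\<And>n. n \<ge> 1 \<Longrightarrow> norm (Li_star_fin zs ss N n) \<le> C * real n powr e"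
    using norm_Li_star_fin_le_powr_in_U[OF assms(2) _ assms(1,4)] by blast
  have summable: "summable (\<lambda>n. real n powr (e - Re s))"
    using e by (simp add: summable_real_powr_iff)
  have "norm (Li_star_fin (z # zs) ((s + of_nat k) # ss) N M)
      \<le> C * (\<Sum>n. real n powr (e - Re s)) * (1 / real N) ^ k" for k M
  proof -
    have "norm (Li_star_fin (z # zs) ((s + of_nat k) # ss) N M)
        \<le> (\<Sum>n=N..M. C * real n powr (e - Re (s + of_nat k)))"
      unfolding Li_star_fin.simps(2) using assms(1,3) C
      by (intro order.trans[OF norm_sum] sum_mono norm_Li_star_summand_le) auto
    also have "\<dots> \<le> (\<Sum>n=N..M. C * (1 / real N) ^ k * real n powr (e - Re s))"
    proof (rule sum_mono)
      fix n assume n: "n \<in> {N..M}"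
      then have "real n powr (e - Re (s + of_nat k)) = (1 / real n) ^ k * real n powr (e - Re s)"
        using assms(1) by (simp add: powr_diff powr_add powr_realpow divide_simps)
      also have "\<dots> \<le> (1 / real N) ^ k * real n powr (e - Re s)"
        using n assms(1) by (intro mult_right_mono power_mono divide_left_mono) auto
      finally show "C * real n powr (e - Re (s + of_nat k))
          \<le> C * (1 / real N) ^ k * real n powr (e - Re s)"
        using \<open>C \<ge> 0\<close> by (simp add: mult_left_mono mult.assoc)
    qed
    also have "\<dots> \<le> C * (1 / real N) ^ k * (\<Sum>n. real n powr (e - Re s))"
      unfolding sum_distrib_left[symmetric] using \<open>C \<ge> 0\<close>
      by (intro mult_left_mono sum_le_suminf summable) auto
    finally show ?thesis by (simp add: mult_ac)
  qed
  then show ?thesis using that by blast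
qed

lemma Li_star_fin_tendsto_Li_star_tail:
  assumes "N \<ge> 1" "length zs = length ss" "\<forall>w\<in>set (z # zs). norm w \<le> 1" "in_U (s # ss)"
  shows "Li_star_fin (z # zs) (s # ss) N \<longlonglongrightarrow> Li_star_tail (z # zs) (s # ss) N"
proof -
  have "\<forall>w\<in>set zs. norm w \<le> 1" using assms(3) by simp
  then obtain e C where e: "e < Re s - 1"
    and C: "\<And>n. n \<ge> 1 \<Longrightarrow> norm (Li_star_fin zs ss N n) \<le> C * real n powr e"
    using norm_Li_star_fin_le_powr_in_U[OF assms(2) _ assms(1,4)] by blast
  have "eventually (\<lambda>n. norm (z ^ n / of_nat n powr s * Li_star_fin zs ss N n)
      \<le> C * real n powr (e - Re s)) sequentially"
    using eventually_ge_at_top[of N]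
  proof eventually_elim
    case (elim n)
    with assms(1,3) C show ?case
      by (intro norm_Li_star_summand_le) auto
  qed
  moreover have "summable (\<lambda>n. C * real n powr (e - Re s))"
    using e by (intro summable_mult) (simp add: summable_real_powr_iff)
  ultimately have "summable (\<lambda>n. z ^ n / of_nat n powr s * Li_star_fin zs ss N n)"
    by (rule summable_comparison_test_ev)
  then have "convergent (Li_star_fin (z # zs) (s # ss) N)"
    unfolding Li_star_fin.simps(2) by (rule convergent_sum_atLeastAtMost)
  then show ?thesis
    unfolding Li_star_tail_def by (simp add: convergent_LIMSEQ_iff)
qed

lemma Li_star_boundary_tendsto_zero:
  assumes "N \<ge> 1" "length zs = length ss" "\<forall>w\<in>set (z # zs). norm w \<le> 1" "in_U (s # ss)"
  shows "(\<lambda>M. z ^ M / of_nat (Suc M) powr (s - 1) * Li_star_fin zs ss N (Suc M)) \<longlonglongrightarrow> 0"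
proof -
  have "\<forall>w\<in>set zs. norm w \<le> 1" using assms(3) by simp
  then obtain e C where e: "e < Re s - 1"
    and C: "\<And>n. n \<ge> 1 \<Longrightarrow> norm (Li_star_fin zs ss N n) \<le> C * real n powr e"
    using norm_Li_star_fin_le_powr_in_U[OF assms(2) _ assms(1,4)] by blast
  have "(\<lambda>M. real (Suc M) powr (e - Re (s - 1))) \<longlonglongrightarrow> 0"
    using e filterlim_compose[OF filterlim_real_sequentially filterlim_Suc]
    by (intro tendsto_neg_powr) auto
  then have lim: "(\<lambda>M. C * real (Suc M) powr (e - Re (s - 1))) \<longlonglongrightarrow> 0"
    by (rule tendsto_mult_right_zero)
  have "norm (z ^ M / of_nat (Suc M) powr (s - 1) * Li_star_fin zs ss N (Suc M))
      \<le> C * real (Suc M) powr (e - Re (s - 1))" for M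
    using assms(3) C[of "Suc M"] by (intro norm_Li_star_summand_le) auto
  then show ?thesis
    by (intro Lim_null_comparison[OF always_eventually lim]) blast
qed

definition powr_diff_coeff :: "complex \<Rightarrow> nat \<Rightarrow> complex" where
  "powr_diff_coeff s k = (-1) ^ k * pochhammer (s - 1) (k + 1) / fact (k + 1)"

lemma powr_diff_coeff_gchoose: "powr_diff_coeff s k = - ((1 - s) gchoose Suc k)"
  by (simp add: powr_diff_coeff_def gbinomial_pochhammer)

lemma sums_powr_diff_coeff:
  assumes "n \<ge> 2"
  shows "(\<lambda>k. powr_diff_coeff s k / of_nat n powr (s + of_nat k))
           sums (1 / of_nat n powr (s - 1) - 1 / of_nat (Suc n) powr (s - 1))"
proof -
  define b where "b = 1 - s"
  have "(\<lambda>k. (b gchoose k) * of_nat n powr (b - of_nat k)) sums (of_nat (Suc n) powr b)"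
    using gen_binomial_complex''[of 1 "real n" b] assms by (simp add: add.commute)
  then have "(\<lambda>k. (b gchoose Suc k) * of_nat n powr (b - of_nat (Suc k)))
      sums (of_nat (Suc n) powr b - of_nat n powr b)"
    by (subst sums_Suc_iff) simp
  then have "(\<lambda>k. - ((b gchoose Suc k) * of_nat n powr (b - of_nat (Suc k))))
      sums (of_nat n powr b - of_nat (Suc n) powr b)"
    using sums_minus by fastforce
  moreover have "- ((b gchoose Suc k) * of_nat n powr (b - of_nat (Suc k)))
      = powr_diff_coeff s k / of_nat n powr (s + of_nat k)" for k
  proof -
    have exponent: "b - of_nat (Suc k) = - (s + of_nat k)" unfolding b_def by simp
    show ?thesis
      unfolding powr_diff_coeff_gchoose exponent powr_minus_divide by (simp add: b_def)
  qed
  moreover have "of_nat n powr b - of_nat (Suc n) powr b =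
      1 / of_nat n powr (s - 1) - 1 / of_nat (Suc n) powr (s - 1)"
    unfolding b_def powr_minus_divide[symmetric] by simp
  ultimately show ?thesis by simp
qed

lemma summable_powr_diff_coeff:
  assumes "N \<ge> 2"
  shows "summable (\<lambda>k. norm (powr_diff_coeff s k) * (1 / real N) ^ k)"
proof -
  define x :: complex where "x = of_real (1 / real N)"
  have "ereal (norm x) < conv_radius (\<lambda>k. (1 - s) gchoose k)"
    using assms by (simp add: x_def norm_divide conv_radius_gchoose)
  then have "summable (\<lambda>k. norm (((1 - s) gchoose k) * x ^ k))"
    by (rule abs_summable_in_conv_radius)
  then have "summable (\<lambda>k. real N * norm (((1 - s) gchoose Suc k) * x ^ Suc k))"
    by (intro summable_mult) (subst summable_Suc_iff)
  moreover have "real N * norm (((1 - s) gchoose Suc k) * x ^ Suc k)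
      = norm (powr_diff_coeff s k) * (1 / real N) ^ k" for k
    using assms unfolding x_def powr_diff_coeff_gchoose
    by (simp add: norm_mult norm_divide norm_power del: of_nat_Suc)
  ultimately show ?thesis by (simp only:)
qed

lemma sums_powr_diff_coeff_Li_star_fin:
  assumes "N \<ge> 2"
  shows "(\<lambda>k. powr_diff_coeff s k * Li_star_fin (z # zs) ((s + of_nat k) # ss) N M)
    sums (\<Sum>n=N..M. z ^ n * (1 / of_nat n powr (s - 1) - 1 / of_nat (Suc n) powr (s - 1))
                      * Li_star_fin zs ss N n)"
proof -
  have "(\<lambda>k. \<Sum>n=N..M. powr_diff_coeff s k / of_nat n powr (s + of_nat k)
                            * (z ^ n * Li_star_fin zs ss N n))
    sums (\<Sum>n=N..M. (1 / of_nat n powr (s - 1) - 1 / of_nat (Suc n) powr (s - 1))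
                      * (z ^ n * Li_star_fin zs ss N n))"
    using assms by (intro sums_sum sums_mult2 sums_powr_diff_coeff) auto
  then show ?thesis
    by (simp add: sum_distrib_left mult_ac)
qed

lemma powr_diff_coeff_Li_star_tail_series:
  assumes "N \<ge> 2" "length zs = length ss" "\<forall>w\<in>set (z # zs). norm w \<le> 1" "in_U (s # ss)"
  defines "T \<equiv> (\<lambda>k. powr_diff_coeff s k * Li_star_tail (z # zs) ((s + of_nat k) # ss) N)"
  shows "summable T"
    and "(\<lambda>M. \<Sum>n=N..M. z ^ n * (1 / of_nat n powr (s - 1) - 1 / of_nat (Suc n) powr (s - 1))
                          * Li_star_fin zs ss N n) \<longlonglongrightarrow> suminf T"
proof -
  let ?a = "\<lambda>k M. powr_diff_coeff s k * Li_star_fin (z # zs) ((s + of_nat k) # ss) N M"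
  have "N \<ge> 1" using assms(1) by simp
  obtain B where B: "\<And>k M. norm (Li_star_fin (z # zs) ((s + of_nat k) # ss) N M) \<le> B * (1 / real N) ^ k"
    using norm_Li_star_fin_add_of_nat_le[OF \<open>N \<ge> 1\<close> assms(2-4)] by blast
  have lim: "(\<lambda>M. ?a k M) \<longlonglongrightarrow> T k" for k
    unfolding T_def using assms(1-4)
    by (intro tendsto_mult_left Li_star_fin_tendsto_Li_star_tail in_U_Cons_add_of_nat) auto
  have bound: "norm (?a k M) \<le> B * (norm (powr_diff_coeff s k) * (1 / real N) ^ k)" for k M
  proof -
    have "norm (?a k M) \<le> norm (powr_diff_coeff s k) * (B * (1 / real N) ^ k)"
      unfolding norm_mult by (intro mult_left_mono B) auto
    then show ?thesis by (simp only: mult.left_commute)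
  qed
  have "(\<forall>\<^sub>F M in sequentially. summable (\<lambda>k. norm (?a k M))) \<and>
      summable (\<lambda>k. norm (T k)) \<and> (\<lambda>M. \<Sum>k. ?a k M) \<longlonglongrightarrow> suminf T"
  proof (rule tannerys_theorem[OF lim])
    show "\<forall>\<^sub>F (k, M) in at_top \<times>\<^sub>F sequentially.
        norm (?a k M) \<le> B * (norm (powr_diff_coeff s k) * (1 / real N) ^ k)"
      by (intro always_eventually allI) (clarify, rule bound)
    show "summable (\<lambda>k. B * (norm (powr_diff_coeff s k) * (1 / real N) ^ k))"
      using summable_powr_diff_coeff[OF assms(1)] by (rule summable_mult)
  qed simp
  then show "summable T"
    and "(\<lambda>M. \<Sum>n=N..M. z ^ n * (1 / of_nat n powr (s - 1) - 1 / of_nat (Suc n) powr (s - 1))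
                          * Li_star_fin zs ss N n) \<longlonglongrightarrow> suminf T"
    using sums_powr_diff_coeff_Li_star_fin[OF assms(1)] summable_norm_cancel
    by (auto simp: sums_iff)
qed

(* Li_star_fin zs ss N (N - 1) is 1 for zs = [] and 0 otherwise, so the boundary term at n = N
   only survives in depth one. *)
lemma powr_diff_coeff_Li_star_tail_sums:
  assumes "N \<ge> 2" "length zs = length ss" "\<forall>w\<in>set (z # zs). norm w \<le> 1" "in_U (s # ss)"
    and diagonal: "(\<lambda>M. \<Sum>m=N..M. z ^ m / of_nat m powr (s - 1)
                       * (Li_star_fin zs ss N m - Li_star_fin zs ss N (m - 1))) \<longlonglongrightarrow> K"
  shows "(\<lambda>k. powr_diff_coeff s k * Li_star_tail (z # zs) ((s + of_nat k) # ss) N)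
    sums ((1 - 1 / z) * Li_star_tail (z # zs) ((s - 1) # ss) N
          + 1 / z * (K + z ^ N / of_nat N powr (s - 1) * Li_star_fin zs ss N (N - 1)))"
proof -
  have "N \<ge> 1" using assms(1) by simp
  define v where "v n = 1 / of_nat n powr (s - 1)" for n :: nat
  define R where "R = Li_star_fin zs ss N"
  define F where "F = Li_star_fin (z # zs) ((s - 1) # ss) N"
  define T where "T = (\<Sum>k. powr_diff_coeff s k * Li_star_tail (z # zs) ((s + of_nat k) # ss) N)"
  define E where "E = z ^ N * v N * R (N - 1)"
  have "(\<lambda>M. \<Sum>n=N..M. z ^ n * (v n - v (Suc n)) * R n) \<longlonglongrightarrow> T"
    using powr_diff_coeff_Li_star_tail_series(2)[OF assms(1-4)] unfolding T_def v_def R_def .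
  moreover have "(\<lambda>M. z ^ M * v (Suc M) * R (Suc M)) \<longlonglongrightarrow> 0"
    using Li_star_boundary_tendsto_zero[OF \<open>N \<ge> 1\<close> assms(2-4)] by (simp add: v_def R_def)
  moreover have "(\<lambda>M. \<Sum>m=N..Suc M. z ^ m * v m * (R m - R (m - 1))) \<longlonglongrightarrow> K"
    using LIMSEQ_Suc[OF diagonal] by (simp add: v_def R_def)
  ultimately have "(\<lambda>M. (\<Sum>n=N..M. z ^ n * (v n - v (Suc n)) * R n) + z ^ M * v (Suc M) * R (Suc M)
      - 1 / z * ((\<Sum>m=N..Suc M. z ^ m * v m * (R m - R (m - 1))) + E)) \<longlonglongrightarrow> T + 0 - 1 / z * (K + E)"
    by (intro tendsto_intros)
  moreover have "\<forall>\<^sub>F M in sequentially. (\<Sum>n=N..M. z ^ n * (v n - v (Suc n)) * R n)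
      + z ^ M * v (Suc M) * R (Suc M) - 1 / z * ((\<Sum>m=N..Suc M. z ^ m * v m * (R m - R (m - 1))) + E)
      = (1 - 1 / z) * F M"
    using eventually_ge_at_top[of N]
  proof eventually_elim
    case (elim M)
    have "F M = (\<Sum>n=N..M. z ^ n * v n * R n)"
      by (simp add: F_def v_def R_def)
    with summation_by_parts_shift[OF \<open>N \<ge> 1\<close> elim, of z v R] show ?case
      by (simp add: E_def)
  qed
  ultimately have "(\<lambda>M. (1 - 1 / z) * F M) \<longlonglongrightarrow> T - 1 / z * (K + E)"
    by (simp add: tendsto_cong)
  then have "(1 - 1 / z) * Li_star_tail (z # zs) ((s - 1) # ss) N = T - 1 / z * (K + E)"
    unfolding Li_star_tail_def F_def by (rule mult_lim_eq)
  moreover have "(\<lambda>k. powr_diff_coeff s k * Li_star_tail (z # zs) ((s + of_nat k) # ss) N) sums T"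
    using powr_diff_coeff_Li_star_tail_series(1)[OF assms(1-4)] unfolding T_def by (rule summable_sums)
  ultimately show ?thesis
    by (simp add: E_def v_def R_def)
qed

lemma Li_star_tail_depth_one:
  assumes "N \<ge> 2" "norm z \<le> 1" "in_U [s]"
  shows "(\<lambda>k. powr_diff_coeff s k * Li_star_tail [z] [s + of_nat k] N)
    sums ((1 - 1 / z) * Li_star_tail [z] [s - 1] N + z ^ (N - 1) / of_nat N powr (s - 1))"
proof -
  have "(\<lambda>k. powr_diff_coeff s k * Li_star_tail [z] [s + of_nat k] N)
    sums ((1 - 1 / z) * Li_star_tail [z] [s - 1] N + 1 / z * (0 + z ^ N / of_nat N powr (s - 1)))"
    using powr_diff_coeff_Li_star_tail_sums[of N "[]" "[]" z s 0] assms by simp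
  moreover have "1 / z * (0 + z ^ N / of_nat N powr (s - 1)) = z ^ (N - 1) / of_nat N powr (s - 1)"
  proof (cases "z = 0")
    case False
    with assms(1) show ?thesis by (simp add: power_eq_if)
  qed (use assms(1) in simp)
  ultimately show ?thesis by simp
qed

lemma Li_star_fin_Cons_diff:
  assumes "1 \<le> N" "N \<le> m"
  shows "Li_star_fin (z # zs) (s # ss) N m - Li_star_fin (z # zs) (s # ss) N (m - 1)
    = z ^ m / of_nat m powr s * Li_star_fin zs ss N m"
  using assms by (cases m) auto

lemma Li_star_fin_diagonal:
  assumes "1 \<le> N"
  shows "(\<Sum>m=N..M. z1 ^ m / of_nat m powr (s1 - 1)
            * (Li_star_fin (z2 # zs) (s2 # ss) N m - Li_star_fin (z2 # zs) (s2 # ss) N (m - 1)))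
    = Li_star_fin ((z1 * z2) # zs) ((s1 + s2 - 1) # ss) N M"
  unfolding Li_star_fin.simps(2)[of "z1 * z2"]
proof (rule sum.cong[OF refl])
  fix m assume "m \<in> {N..M}"
  then have diff: "Li_star_fin (z2 # zs) (s2 # ss) N m - Li_star_fin (z2 # zs) (s2 # ss) N (m - 1)
      = z2 ^ m / of_nat m powr s2 * Li_star_fin zs ss N m"
    using assms by (intro Li_star_fin_Cons_diff) auto
  have "(of_nat m powr (s1 + s2 - 1) :: complex) = of_nat m powr (s1 - 1) * of_nat m powr s2"
    using powr_add[of "of_nat m :: complex" "s1 - 1" s2] by (simp add: diff_add_eq)
  then show "z1 ^ m / of_nat m powr (s1 - 1)
      * (Li_star_fin (z2 # zs) (s2 # ss) N m - Li_star_fin (z2 # zs) (s2 # ss) N (m - 1))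
    = (z1 * z2) ^ m / of_nat m powr (s1 + s2 - 1) * Li_star_fin zs ss N m"
    unfolding diff by (simp add: power_mult_distrib)
qed

lemma Li_star_tail_depth_ge_two:
  assumes "N \<ge> 2" "length zs = length ss" "\<forall>w\<in>set (z1 # z2 # zs). norm w \<le> 1"
    and "in_U (s1 # s2 # ss)"
  shows "(\<lambda>k. powr_diff_coeff s1 k * Li_star_tail (z1 # z2 # zs) ((s1 + of_nat k) # s2 # ss) N)
    sums ((1 - 1 / z1) * Li_star_tail (z1 # z2 # zs) ((s1 - 1) # s2 # ss) N
          + 1 / z1 * Li_star_tail ((z1 * z2) # zs) ((s1 + s2 - 1) # ss) N)"
proof -
  have "N \<ge> 1" using assms(1) by simp
  have "\<forall>w\<in>set ((z1 * z2) # zs). norm w \<le> 1"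
    using assms(3) by (auto simp: norm_mult intro: mult_le_one)
  then have "Li_star_fin ((z1 * z2) # zs) ((s1 + s2 - 1) # ss) N
      \<longlonglongrightarrow> Li_star_tail ((z1 * z2) # zs) ((s1 + s2 - 1) # ss) N"
    using assms(2,4) \<open>N \<ge> 1\<close> by (intro Li_star_fin_tendsto_Li_star_tail in_U_merge)
  then have "(\<lambda>M. \<Sum>m=N..M. z1 ^ m / of_nat m powr (s1 - 1)
      * (Li_star_fin (z2 # zs) (s2 # ss) N m - Li_star_fin (z2 # zs) (s2 # ss) N (m - 1)))
      \<longlonglongrightarrow> Li_star_tail ((z1 * z2) # zs) ((s1 + s2 - 1) # ss) N"
    by (simp only: Li_star_fin_diagonal[OF \<open>N \<ge> 1\<close>])
  from powr_diff_coeff_Li_star_tail_sums[OF assms(1) _ assms(3) _ this] assms(2,4) \<open>N \<ge> 1\<close>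
  show ?thesis by simp
qed

theorem proposition3:
  fixes z s :: "complex list" and N :: nat
  assumes "N \<ge> 2"
    and "length z = length s" and "length s \<ge> 1"
    and "\<forall>w\<in>set z. norm w \<le> 1"
    and "in_U s"
  shows "(length s = 1 \<longrightarrow>
           (\<lambda>k. (-1) ^ k * pochhammer (s!0 - 1) (k + 1) / fact (k + 1)
                 * Li_star_tail [z!0] [s!0 + of_nat k] N)
           sums ((1 - 1 / z!0) * Li_star_tail [z!0] [s!0 - 1] N
                 + (z!0) ^ (N - 1) / (of_nat N powr (s!0 - 1))))
       \<and> (length s > 1 \<longrightarrow>
           (\<lambda>k. (-1) ^ k * pochhammer (s!0 - 1) (k + 1) / fact (k + 1)
                 * Li_star_tail z ((s!0 + of_nat k) # tl s) N)
           sums ((1 - 1 / z!0) * Li_star_tail z ((s!0 - 1) # tl s) N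
                 + 1 / z!0 * Li_star_tail ((z!0 * z!1) # drop 2 z)
                                          ((s!0 + s!1 - 1) # drop 2 s) N))"
proof -
  obtain s1 ss where s: "s = s1 # ss" using assms(3) by (cases s) auto
  obtain z1 zs where z: "z = z1 # zs" using assms(2,3) by (cases z) auto
  show ?thesis
  proof (cases ss)
    case Nil
    with assms(2) s z have "zs = []" by simp
    with assms s z Nil Li_star_tail_depth_one[of N z1 s1] show ?thesis
      by (simp add: powr_diff_coeff_def)
  next
    case (Cons s2 ss')
    with assms(2) s z obtain z2 zs' where "zs = z2 # zs'" by (cases zs) auto
    with assms s z Cons Li_star_tail_depth_ge_two[of N zs' ss' z1 z2 s1 s2] show ?thesis
      by (simp add: powr_diff_coeff_def)
  qed
qed

end
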